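(* Let $n\ge1$, $\preceq$ an admissible order on $L([0,1])$, $F\colon L([0,1])^2\to L([0,1])$, $G\colon L([0,1])^n\to L([0,1])$. The IV Sugeno-like $FG$-functional $\mathbf S_m^{F,G}$ satisfies: (i) $\mathbf S_m^{F,G}\succeq\wedge$ for every IV fuzzy measure $m$ whenever (a) $F(X,\mathbf1)\succeq X$ for all $X$ and $G=f\circ\mathrm{Proj}_1$ for some $f\colon L([0,1])\to L([0,1])$ with $f\succeq \mathrm{Id}$; or (b) $F(X,\mathbf1)\succeq X$ for all $X$, $F$ is non-decreasing in the second variable and $G=f\circ\vee$ for some $f$ with $f\succeq\mathrm{Id}$; (ii) $\mathbf S_m^{F,G}\preceq\vee$ for every $m$ whenever (a) $F(X,\mathbf1)\preceq X$ for all $X$ and $G=f\circ\mathrm{Proj}_1$ with $f\preceq\mathrm{Id}$; or (b) $F(X,\mathbf1)\preceq X$ for all $X$, $F$ is non-decreasing in the second variable and $G=f\circ\vee$ with $f\preceq\mathrm{Id}$; (iii) $\mathbf S_m^{F,G}$ is internal for every $m$ whenever (a) $F(X,\mathbf1)=X$ for all $X$ and $G=\mathrm{Proj}_1$; or (b) $F(X,\mathbf1)=X$ for all $X$, $F$ is non-decreasing in the second variable and $G=\vee$.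
   Context: $N=\{1,\dots,n\}$. $L([0,1])=\{[a,b]:0\le a\le b\le1\}$, $\mathbf0=[0,0]$, $\mathbf1=[1,1]$. An admissible order $\preceq$ is a total order on $L([0,1])$ with $[a,b]\preceq[c,d]$ whenever $a\le c$, $b\le d$. $\vee,\wedge$ denote maximum and minimum w.r.t. $\preceq$; monotonicity is w.r.t. $\preceq$; $\mathrm{Proj}_1(X_1,\dots,X_n)=X_1$; $f\succeq\mathrm{Id}$ means $f(X)\succeq X$ for all $X$ (similarly $\preceq$). $\mathbf S\succeq\wedge$ means $\mathbf S(X_1,\dots,X_n)\succeq\wedge(X_1,\dots,X_n)$ for all inputs, similarly $\mathbf S\preceq\vee$; internal means both. An IV fuzzy measure w.r.t. $\preceq$ is $m\colon2^N\to L([0,1])$, $m(\emptyset)=\mathbf0$, $m(N)=\mathbf1$, $m(A)\preceq m(B)$ for $A\subseteq B$. For a permutation $\sigma$, $E_{\sigma(i)}=\{\sigma(i),\dots,\sigma(n)\}$. $\mathbf S_m^{F,G}(X_1,\dots,X_n)=G\big(F(X_{\sigma(1)},m(E_{\sigma(1)})),\dots,F(X_{\sigma(n)},m(E_{\sigma(n)}))\big)$ with $\sigma$ any permutation such that $X_{\sigma(1)}\preceq\dots\preceq X_{\sigma(n)}$; it is defined when this value does not depend on the choice of $\sigma$ for all inputs. *)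

theory Defs
  imports Main "HOL.Real"
begin

typedef ivl = "{p :: real \<times> real. 0 \<le> fst p \<and> fst p \<le> snd p \<and> snd p \<le> 1}"
  morphisms ivl_rep Abs_ivl
  by (rule exI[of _ "(0,0)"]) auto

definition lo :: "ivl \<Rightarrow> real" where "lo X = fst (ivl_rep X)"
definition hi :: "ivl \<Rightarrow> real" where "hi X = snd (ivl_rep X)"

definition iv0 :: ivl where "iv0 = Abs_ivl (0, 0)"
definition iv1 :: ivl where "iv1 = Abs_ivl (1, 1)"

definition admissible_order :: "(ivl \<Rightarrow> ivl \<Rightarrow> bool) \<Rightarrow> bool" where
  "admissible_order le \<longleftrightarrow>
     (\<forall>x. le x x) \<and>
     (\<forall>x y. le x y \<and> le y x \<longrightarrow> x = y) \<and>
     (\<forall>x y z. le x y \<and> le y z \<longrightarrow> le x z) \<and>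
     (\<forall>x y. le x y \<or> le y x) \<and>
     (\<forall>x y. lo x \<le> lo y \<and> hi x \<le> hi y \<longrightarrow> le x y)"

definition iv_max :: "(ivl \<Rightarrow> ivl \<Rightarrow> bool) \<Rightarrow> ivl \<Rightarrow> ivl \<Rightarrow> ivl" where
  "iv_max le x y = (if le x y then y else x)"
definition iv_min :: "(ivl \<Rightarrow> ivl \<Rightarrow> bool) \<Rightarrow> ivl \<Rightarrow> ivl \<Rightarrow> ivl" where
  "iv_min le x y = (if le x y then x else y)"

definition iv_Max :: "(ivl \<Rightarrow> ivl \<Rightarrow> bool) \<Rightarrow> ivl list \<Rightarrow> ivl" where
  "iv_Max le xs = fold (iv_max le) (tl xs) (hd xs)"
definition iv_Min :: "(ivl \<Rightarrow> ivl \<Rightarrow> bool) \<Rightarrow> ivl list \<Rightarrow> ivl" where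
  "iv_Min le xs = fold (iv_min le) (tl xs) (hd xs)"

definition tuple :: "nat \<Rightarrow> (nat \<Rightarrow> ivl) \<Rightarrow> ivl list" where
  "tuple n X = map X [1..<n+1]"

definition iv_fuzzy_measure :: "(ivl \<Rightarrow> ivl \<Rightarrow> bool) \<Rightarrow> nat \<Rightarrow> (nat set \<Rightarrow> ivl) \<Rightarrow> bool" where
  "iv_fuzzy_measure le n m \<longleftrightarrow>
     m {} = iv0 \<and> m {1..n} = iv1 \<and>
     (\<forall>A B. A \<subseteq> B \<and> B \<subseteq> {1..n} \<longrightarrow> le (m A) (m B))"

definition sorting_perm :: "(ivl \<Rightarrow> ivl \<Rightarrow> bool) \<Rightarrow> nat \<Rightarrow> (nat \<Rightarrow> ivl) \<Rightarrow> (nat \<Rightarrow> nat) \<Rightarrow> bool" where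
  "sorting_perm le n X \<sigma> \<longleftrightarrow>
     bij_betw \<sigma> {1..n} {1..n} \<and>
     (\<forall>i j. 1 \<le> i \<and> i \<le> j \<and> j \<le> n \<longrightarrow> le (X (\<sigma> i)) (X (\<sigma> j)))"

text \<open>Value of the Sugeno-like FG-functional for a given permutation; E_{sigma(i)} = sigma ` {i..n}.\<close>
definition sugeno_val ::
  "(ivl \<Rightarrow> ivl \<Rightarrow> ivl) \<Rightarrow> (ivl list \<Rightarrow> ivl) \<Rightarrow> (nat set \<Rightarrow> ivl) \<Rightarrow> nat \<Rightarrow> (nat \<Rightarrow> ivl) \<Rightarrow> (nat \<Rightarrow> nat) \<Rightarrow> ivl" where
  "sugeno_val F G m n X \<sigma> = G (map (\<lambda>i. F (X (\<sigma> i)) (m (\<sigma> ` {i..n}))) [1..<n+1])"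

definition sugeno_defined ::
  "(ivl \<Rightarrow> ivl \<Rightarrow> bool) \<Rightarrow> (ivl \<Rightarrow> ivl \<Rightarrow> ivl) \<Rightarrow> (ivl list \<Rightarrow> ivl) \<Rightarrow> (nat set \<Rightarrow> ivl) \<Rightarrow> nat \<Rightarrow> bool" where
  "sugeno_defined le F G m n \<longleftrightarrow>
     (\<forall>X \<sigma> \<tau>. sorting_perm le n X \<sigma> \<and> sorting_perm le n X \<tau> \<longrightarrow>
        sugeno_val F G m n X \<sigma> = sugeno_val F G m n X \<tau>)"

definition sugeno ::
  "(ivl \<Rightarrow> ivl \<Rightarrow> bool) \<Rightarrow> (ivl \<Rightarrow> ivl \<Rightarrow> ivl) \<Rightarrow> (ivl list \<Rightarrow> ivl) \<Rightarrow> (nat set \<Rightarrow> ivl) \<Rightarrow> nat \<Rightarrow> (nat \<Rightarrow> ivl) \<Rightarrow> ivl" where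
  "sugeno le F G m n X = sugeno_val F G m n X (SOME \<sigma>. sorting_perm le n X \<sigma>)"

end

(*
  Whichever permutation \<sigma> is used to evaluate the functional, the argument list of G
  starts with F(X_\<sigma>(1), m(N)) = F(X_\<sigma>(1), 1), and every argument has the form F(X_\<sigma>(i), A)
  with X_\<sigma>(i) one of the inputs and A = m(E_\<sigma>(i)) \<preceq> 1 by monotonicity of m. If G dominates
  its first argument and F(X, 1) \<succeq> X, the value is therefore \<succeq> X_\<sigma>(1) \<succeq> min. Dually, if G is
  dominated by its first argument, the value is \<preceq> X_\<sigma>(1) \<preceq> max; if G is dominated by the maximum
  of its arguments and F is monotone in the second variable, every argument is
  \<preceq> F(X_\<sigma>(i), 1) \<preceq> X_\<sigma>(i) \<preceq> max.
*)
theory Submission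
  imports Defs
begin

definition sugeno_args ::
  "(ivl \<Rightarrow> ivl \<Rightarrow> ivl) \<Rightarrow> (nat set \<Rightarrow> ivl) \<Rightarrow> nat \<Rightarrow> (nat \<Rightarrow> ivl) \<Rightarrow> (nat \<Rightarrow> nat) \<Rightarrow> ivl list" where
  "sugeno_args F m n X \<sigma> = map (\<lambda>i. F (X (\<sigma> i)) (m (\<sigma> ` {i..n}))) [1..<n+1]"

lemma sugeno_val_eq: "sugeno_val F G m n X \<sigma> = G (sugeno_args F m n X \<sigma>)"
  unfolding sugeno_val_def sugeno_args_def ..

lemma length_sugeno_args [simp]: "length (sugeno_args F m n X \<sigma>) = n"
  by (simp add: sugeno_args_def)

lemma set_sugeno_args:
  "set (sugeno_args F m n X \<sigma>) = (\<lambda>i. F (X (\<sigma> i)) (m (\<sigma> ` {i..n}))) ` {1..n}"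
  by (auto simp: sugeno_args_def)

lemma hd_sugeno_args:
  assumes "n \<ge> 1" and "bij_betw \<sigma> {1..n} {1..n}"
  shows "hd (sugeno_args F m n X \<sigma>) = F (X (\<sigma> 1)) (m {1..n})"
  using assms by (simp add: sugeno_args_def upt_conv_Cons bij_betw_def del: upt_Suc)

lemma set_tuple: "set (tuple n X) = X ` {1..n}"
  by (auto simp: tuple_def)

lemma iv_fuzzy_measure_le_iv1:
  assumes "iv_fuzzy_measure le n m" and "A \<subseteq> {1..n}"
  shows "le (m A) iv1"
  using assms unfolding iv_fuzzy_measure_def by (metis subset_refl)

lemma hd_sugeno_args_measure:
  assumes "n \<ge> 1" and "bij_betw \<sigma> {1..n} {1..n}" and "iv_fuzzy_measure le n m"
  shows "hd (sugeno_args F m n X \<sigma>) = F (X (\<sigma> 1)) iv1"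
    and "X (\<sigma> 1) \<in> set (tuple n X)"
proof -
  have "m {1..n} = iv1"
    using assms(3) by (simp add: iv_fuzzy_measure_def)
  then show "hd (sugeno_args F m n X \<sigma>) = F (X (\<sigma> 1)) iv1"
    by (simp add: hd_sugeno_args[OF assms(1,2)])
  have "\<sigma> 1 \<in> {1..n}"
    using assms(1,2) bij_betwE by fastforce
  then show "X (\<sigma> 1) \<in> set (tuple n X)"
    by (simp add: set_tuple)
qed

lemma sugeno_args_memE:
  assumes "y \<in> set (sugeno_args F m n X \<sigma>)"
    and "bij_betw \<sigma> {1..n} {1..n}" and "iv_fuzzy_measure le n m"
  obtains x A where "x \<in> set (tuple n X)" and "le A iv1" and "y = F x A"
proof -
  from assms(1) obtain i where i: "i \<in> {1..n}" and y: "y = F (X (\<sigma> i)) (m (\<sigma> ` {i..n}))"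
    by (auto simp: set_sugeno_args)
  show ?thesis
  proof (rule that)
    show "X (\<sigma> i) \<in> set (tuple n X)"
      using i assms(2) bij_betwE by (fastforce simp: set_tuple)
    have "\<sigma> ` {i..n} \<subseteq> {1..n}"
      using i assms(2) bij_betwE by fastforce
    then show "le (m (\<sigma> ` {i..n})) iv1"
      by (rule iv_fuzzy_measure_le_iv1[OF assms(3)])
  qed (fact y)
qed

locale admissible_iv_order =
  fixes le :: "ivl \<Rightarrow> ivl \<Rightarrow> bool"
  assumes admissible: "admissible_order le"
begin

sublocale linorder le "\<lambda>x y. le x y \<and> \<not> le y x"
  using admissible unfolding admissible_order_def by unfold_locales blast+

lemma iv_max_eq_max: "iv_max le = max"
  by (simp add: fun_eq_iff iv_max_def max_def)

lemma iv_min_eq_min: "iv_min le = min"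
  by (simp add: fun_eq_iff iv_min_def min_def)

lemma iv_Max_eq_Max: "xs \<noteq> [] \<Longrightarrow> iv_Max le xs = Max (set xs)"
  by (metis iv_Max_def iv_max_eq_max list.collapse Max.set_eq_fold)

lemma iv_Min_eq_Min: "xs \<noteq> [] \<Longrightarrow> iv_Min le xs = Min (set xs)"
  by (metis iv_Min_def iv_min_eq_min list.collapse Min.set_eq_fold)

lemma le_iv_Max: "x \<in> set xs \<Longrightarrow> le x (iv_Max le xs)"
  by (cases "xs = []") (simp_all add: iv_Max_eq_Max)

lemma iv_Min_le: "x \<in> set xs \<Longrightarrow> le (iv_Min le xs) x"
  by (cases "xs = []") (simp_all add: iv_Min_eq_Min)

lemma iv_Max_le_iff: "xs \<noteq> [] \<Longrightarrow> le (iv_Max le xs) y \<longleftrightarrow> (\<forall>x\<in>set xs. le x y)"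
  by (simp add: iv_Max_eq_Max)

lemma hd_le_iv_Max: "xs \<noteq> [] \<Longrightarrow> le (hd xs) (iv_Max le xs)"
  by (simp add: le_iv_Max)

lemma sorting_perm_exists: "\<exists>\<sigma>. sorting_perm le n X \<sigma>"
proof -
  define L where "L = sort_key X [1..<n+1]"
  define \<sigma> where "\<sigma> i = L ! (i - 1)" for i
  have len: "length L = n" and set: "set L = {1..n}" and dist: "distinct L"
    and sorted: "sorted (map X L)"
    by (auto simp: L_def)
  have "bij_betw \<sigma> {1..n} {1..n}"
  proof -
    have "bij_betw (\<lambda>i. i - 1) {1..n} {..<n}"
      by (rule bij_betw_byWitness[where f' = Suc]) auto
    moreover have "bij_betw ((!) L) {..<n} {1..n}"
      using bij_betw_nth[OF dist] len set by simp
    ultimately show ?thesis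
      unfolding \<sigma>_def by (rule bij_betw_trans[unfolded comp_def])
  qed
  moreover have "le (X (\<sigma> i)) (X (\<sigma> j))" if "1 \<le> i" "i \<le> j" "j \<le> n" for i j
    using sorted_nth_mono[OF sorted, of "i - 1" "j - 1"] that len by (simp add: \<sigma>_def)
  ultimately show ?thesis
    unfolding sorting_perm_def by blast
qed

lemma sugeno_eq_bij_args:
  obtains \<sigma> where "bij_betw \<sigma> {1..n} {1..n}"
    and "sugeno le F G m n X = G (sugeno_args F m n X \<sigma>)"
proof
  let ?\<sigma> = "SOME \<sigma>. sorting_perm le n X \<sigma>"
  show "bij_betw ?\<sigma> {1..n} {1..n}"
    using someI_ex[OF sorting_perm_exists] unfolding sorting_perm_def by blast
  show "sugeno le F G m n X = G (sugeno_args F m n X ?\<sigma>)"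
    unfolding sugeno_def sugeno_val_eq ..
qed

lemma sugeno_ge_iv_Min:
  assumes n: "n \<ge> 1" and m: "iv_fuzzy_measure le n m"
    and F: "\<And>X. le X (F X iv1)" and G: "\<And>ys. length ys = n \<Longrightarrow> le (hd ys) (G ys)"
  shows "le (iv_Min le (tuple n X)) (sugeno le F G m n X)"
proof -
  obtain \<sigma> where \<sigma>: "bij_betw \<sigma> {1..n} {1..n}"
    and S: "sugeno le F G m n X = G (sugeno_args F m n X \<sigma>)"
    by (rule sugeno_eq_bij_args)
  note first = hd_sugeno_args_measure[OF n \<sigma> m]
  have "le (iv_Min le (tuple n X)) (X (\<sigma> 1))"
    using first(2) by (rule iv_Min_le)
  also have "le \<dots> (F (X (\<sigma> 1)) iv1)"
    by (rule F)
  also have "\<dots> = hd (sugeno_args F m n X \<sigma>)"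
    using first(1) by simp
  also have "le \<dots> (sugeno le F G m n X)"
    unfolding S by (rule G) simp
  finally show ?thesis .
qed

lemma sugeno_le_iv_Max_of_le_hd:
  assumes n: "n \<ge> 1" and m: "iv_fuzzy_measure le n m"
    and F: "\<And>X. le (F X iv1) X" and G: "\<And>ys. length ys = n \<Longrightarrow> le (G ys) (hd ys)"
  shows "le (sugeno le F G m n X) (iv_Max le (tuple n X))"
proof -
  obtain \<sigma> where \<sigma>: "bij_betw \<sigma> {1..n} {1..n}"
    and S: "sugeno le F G m n X = G (sugeno_args F m n X \<sigma>)"
    by (rule sugeno_eq_bij_args)
  note first = hd_sugeno_args_measure[OF n \<sigma> m]
  have "le (sugeno le F G m n X) (hd (sugeno_args F m n X \<sigma>))"
    unfolding S by (rule G) simp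
  also have "\<dots> = F (X (\<sigma> 1)) iv1"
    using first(1) .
  also have "le \<dots> (X (\<sigma> 1))"
    by (rule F)
  also have "le \<dots> (iv_Max le (tuple n X))"
    using first(2) by (rule le_iv_Max)
  finally show ?thesis .
qed

lemma sugeno_le_iv_Max_of_le_iv_Max:
  assumes n: "n \<ge> 1" and m: "iv_fuzzy_measure le n m"
    and F: "\<And>X. le (F X iv1) X" and F_mono: "\<And>X Y Z. le Y Z \<Longrightarrow> le (F X Y) (F X Z)"
    and G: "\<And>ys. length ys = n \<Longrightarrow> le (G ys) (iv_Max le ys)"
  shows "le (sugeno le F G m n X) (iv_Max le (tuple n X))"
proof -
  obtain \<sigma> where \<sigma>: "bij_betw \<sigma> {1..n} {1..n}"
    and S: "sugeno le F G m n X = G (sugeno_args F m n X \<sigma>)"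
    by (rule sugeno_eq_bij_args)
  have "le y (iv_Max le (tuple n X))" if y_mem: "y \<in> set (sugeno_args F m n X \<sigma>)" for y
  proof -
    obtain x A where x: "x \<in> set (tuple n X)" and "le A iv1" and y: "y = F x A"
      using sugeno_args_memE[OF y_mem \<sigma> m] .
    from \<open>le A iv1\<close> have "le y (F x iv1)"
      unfolding y by (rule F_mono)
    also have "le \<dots> x"
      by (rule F)
    also have "le \<dots> (iv_Max le (tuple n X))"
      using x by (rule le_iv_Max)
    finally show ?thesis .
  qed
  moreover have "sugeno_args F m n X \<sigma> \<noteq> []"
    using n by (metis length_sugeno_args list.size(3) not_one_le_zero)
  ultimately have "le (iv_Max le (sugeno_args F m n X \<sigma>)) (iv_Max le (tuple n X))"
    by (simp add: iv_Max_le_iff)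
  with G[of "sugeno_args F m n X \<sigma>"] show ?thesis
    unfolding S by simp
qed

lemma sugeno_ge_iv_Min_of_inflationary:
  assumes n: "n \<ge> 1" and m: "iv_fuzzy_measure le n m"
    and F: "\<And>X. le X (F X iv1)" and f: "\<And>X. le X (f X)"
    and G: "(\<forall>xs. length xs = n \<longrightarrow> G xs = f (hd xs)) \<or>
      (\<forall>xs. length xs = n \<longrightarrow> G xs = f (iv_Max le xs))"
  shows "le (iv_Min le (tuple n X)) (sugeno le F G m n X)"
  using n m F
proof (rule sugeno_ge_iv_Min)
  fix ys :: "ivl list"
  assume len: "length ys = n"
  have "le (hd ys) (f (hd ys))"
    by (rule f)
  moreover have "le (hd ys) (f (iv_Max le ys))"
  proof -
    have "le (hd ys) (iv_Max le ys)"
      using len n by (intro hd_le_iv_Max) auto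
    also have "le \<dots> (f (iv_Max le ys))"
      by (rule f)
    finally show ?thesis .
  qed
  ultimately show "le (hd ys) (G ys)"
    using G len by auto
qed

lemma sugeno_le_iv_Max_of_deflationary:
  assumes n: "n \<ge> 1" and m: "iv_fuzzy_measure le n m"
    and F: "\<And>X. le (F X iv1) X" and f: "\<And>X. le (f X) X"
    and G: "(\<forall>xs. length xs = n \<longrightarrow> G xs = f (hd xs)) \<or>
      ((\<forall>X Y Z. le Y Z \<longrightarrow> le (F X Y) (F X Z)) \<and> (\<forall>xs. length xs = n \<longrightarrow> G xs = f (iv_Max le xs)))"
  shows "le (sugeno le F G m n X) (iv_Max le (tuple n X))"
  using G
proof
  assume "\<forall>xs. length xs = n \<longrightarrow> G xs = f (hd xs)"
  with F f show ?thesis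
    by (intro sugeno_le_iv_Max_of_le_hd[OF n m]) auto
next
  assume "(\<forall>X Y Z. le Y Z \<longrightarrow> le (F X Y) (F X Z)) \<and> (\<forall>xs. length xs = n \<longrightarrow> G xs = f (iv_Max le xs))"
  with F f show ?thesis
    by (intro sugeno_le_iv_Max_of_le_iv_Max[OF n m]) auto
qed

end

theorem proposition4:
  fixes n :: nat
    and le :: "ivl \<Rightarrow> ivl \<Rightarrow> bool"
    and F :: "ivl \<Rightarrow> ivl \<Rightarrow> ivl"
    and G :: "ivl list \<Rightarrow> ivl"
  assumes "n \<ge> 1"
    and "admissible_order le"
  shows
   "(((\<forall>X. le X (F X iv1)) \<and>
       (\<exists>f. (\<forall>X. le X (f X)) \<and> (\<forall>xs. length xs = n \<longrightarrow> G xs = f (hd xs))))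
     \<or> ((\<forall>X. le X (F X iv1)) \<and> (\<forall>X Y Z. le Y Z \<longrightarrow> le (F X Y) (F X Z)) \<and>
       (\<exists>f. (\<forall>X. le X (f X)) \<and> (\<forall>xs. length xs = n \<longrightarrow> G xs = f (iv_Max le xs))))
     \<longrightarrow> (\<forall>m. iv_fuzzy_measure le n m \<and> sugeno_defined le F G m n \<longrightarrow>
           (\<forall>X. le (iv_Min le (tuple n X)) (sugeno le F G m n X))))
  \<and>
   (((\<forall>X. le (F X iv1) X) \<and>
       (\<exists>f. (\<forall>X. le (f X) X) \<and> (\<forall>xs. length xs = n \<longrightarrow> G xs = f (hd xs))))
     \<or> ((\<forall>X. le (F X iv1) X) \<and> (\<forall>X Y Z. le Y Z \<longrightarrow> le (F X Y) (F X Z)) \<and>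
       (\<exists>f. (\<forall>X. le (f X) X) \<and> (\<forall>xs. length xs = n \<longrightarrow> G xs = f (iv_Max le xs))))
     \<longrightarrow> (\<forall>m. iv_fuzzy_measure le n m \<and> sugeno_defined le F G m n \<longrightarrow>
           (\<forall>X. le (sugeno le F G m n X) (iv_Max le (tuple n X)))))
  \<and>
   (((\<forall>X. F X iv1 = X) \<and> (\<forall>xs. length xs = n \<longrightarrow> G xs = hd xs))
     \<or> ((\<forall>X. F X iv1 = X) \<and> (\<forall>X Y Z. le Y Z \<longrightarrow> le (F X Y) (F X Z)) \<and>
        (\<forall>xs. length xs = n \<longrightarrow> G xs = iv_Max le xs))
     \<longrightarrow> (\<forall>m. iv_fuzzy_measure le n m \<and> sugeno_defined le F G m n \<longrightarrow>
           (\<forall>X. le (iv_Min le (tuple n X)) (sugeno le F G m n X) \<and>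
                le (sugeno le F G m n X) (iv_Max le (tuple n X)))))"
proof -
  interpret admissible_iv_order le
    by unfold_locales (fact assms(2))
  note lower = sugeno_ge_iv_Min_of_inflationary[OF assms(1)]
    and upper = sugeno_le_iv_Max_of_deflationary[OF assms(1)]
  show ?thesis
    apply (intro conjI impI allI; elim conjE disjE exE)
    subgoal for m X f by (rule lower[where f = f]) blast+
    subgoal for m X f by (rule lower[where f = f]) blast+
    subgoal for m X f by (rule upper[where f = f]) blast+
    subgoal for m X f by (rule upper[where f = f]) blast+
    subgoal by (rule lower[where f = "\<lambda>X. X"]) auto
    subgoal by (rule lower[where f = "\<lambda>X. X"]) auto
    subgoal by (rule upper[where f = "\<lambda>X. X"]) auto
    subgoal by (rule upper[where f = "\<lambda>X. X"]) auto
    done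
qed

end
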